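(* Let $m\ge2$, $1\le i\le m-1$, and let $f(z)=f(z_1,\dots,z_m)$ be a rational function over $\mathbb Q(q,t)$ which is antisymmetric in $z_i$ and $z_{i+1}$. Then \[ \mathbf H^m_{q,t}\bigl(\Omega[M\,z_i/z_{i+1}]\,f(z)\bigr)=0,\qquad\text{where } \Omega[Mz]=\frac{(1-qz)(1-tz)}{(1-z)(1-qtz)}. \]
   Context: $M=(1-q)(1-t)$. For a rational function $g(z_1,\dots,z_m)$, $\boldsymbol\sigma(g)=\sum_{w\in S_m}w\bigl(g/\prod_{j<k}(1-z_k/z_j)\bigr)$ ($S_m$ permuting the variables) and \[ \mathbf H^m_{q,t}(g)=\boldsymbol\sigma\Bigl(g\,\frac{\prod_{j<k}(1-qt\,z_j/z_k)}{\prod_{j<k}(1-q\,z_j/z_k)(1-t\,z_j/z_k)}\Bigr), \] a symmetric rational function. *)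

theory Defs
  imports Complex_Main "HOL-Library.Poly_Mapping" "HOL-Computational_Algebra.Fraction_Field"
          "HOL-Combinatorics.Permutations" "HOL-Combinatorics.Transposition"
begin

text \<open>Polynomials over the rationals in countably many variables x_0, x_1, ...
  (monomials are finitely supported exponent vectors), and their fraction field.
  We use x_0 = q, x_1 = t, and x_(j+1) = z_j for j = 1..m.  Thus
  Q(q,t)(z_1,...,z_m) is the subfield of rational functions involving only the
  variables x_0..x_(m+1).\<close>

type_synonym rpoly = "(nat \<Rightarrow>\<^sub>0 nat) \<Rightarrow>\<^sub>0 rat"
type_synonym ratfun = "rpoly fract"

definition Xv :: "nat \<Rightarrow> ratfun" where
  "Xv k = Fract (Poly_Mapping.single (Poly_Mapping.single k 1) 1) 1"

definition qv :: ratfun where "qv = Xv 0"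
definition tv :: ratfun where "tv = Xv 1"
definition zv :: "nat \<Rightarrow> ratfun" where "zv j = Xv (Suc j)"

definition poly_in_vars :: "nat set \<Rightarrow> rpoly \<Rightarrow> bool" where
  "poly_in_vars N p \<longleftrightarrow> (\<forall>\<alpha> \<in> Poly_Mapping.keys p. Poly_Mapping.keys \<alpha> \<subseteq> N)"

definition ratfun_in_vars :: "nat set \<Rightarrow> ratfun \<Rightarrow> bool" where
  "ratfun_in_vars N x \<longleftrightarrow>
     (\<exists>a b. b \<noteq> 0 \<and> x = Fract a b \<and> poly_in_vars N a \<and> poly_in_vars N b)"

definition ren_poly :: "(nat \<Rightarrow> nat) \<Rightarrow> rpoly \<Rightarrow> rpoly" where
  "ren_poly \<sigma> p = Poly_Mapping.map_key (Poly_Mapping.map_key \<sigma>) p"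

definition ren_ratfun :: "(nat \<Rightarrow> nat) \<Rightarrow> ratfun \<Rightarrow> ratfun" where
  "ren_ratfun \<sigma> x =
     (SOME y. \<exists>a b. b \<noteq> 0 \<and> x = Fract a b \<and> y = Fract (ren_poly \<sigma> a) (ren_poly \<sigma> b))"

text \<open>A permutation w of {1..m} acts on rational functions by z_j \<mapsto> z_(w j),
  fixing q and t.\<close>
definition var_perm :: "(nat \<Rightarrow> nat) \<Rightarrow> nat \<Rightarrow> nat" where
  "var_perm w k = (if k \<ge> 2 then Suc (w (k - 1)) else k)"

definition act :: "(nat \<Rightarrow> nat) \<Rightarrow> ratfun \<Rightarrow> ratfun" where
  "act w g = ren_ratfun (var_perm w) g"

definition symz :: "nat \<Rightarrow> ratfun \<Rightarrow> ratfun" where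
  "symz m g = (\<Sum>w | w permutes {1..m}.
      act w (g / (\<Prod>j\<in>{1..m}. \<Prod>k\<in>{j<..m}. (1 - zv k / zv j))))"

definition Hqt :: "nat \<Rightarrow> ratfun \<Rightarrow> ratfun" where
  "Hqt m g = symz m (g * (\<Prod>j\<in>{1..m}. \<Prod>k\<in>{j<..m}.
      (1 - qv * tv * zv j / zv k) / ((1 - qv * zv j / zv k) * (1 - tv * zv j / zv k))))"

text \<open>\<Omega>[M x] with M = (1-q)(1-t).\<close>
definition OmegaM :: "ratfun \<Rightarrow> ratfun" where
  "OmegaM x = ((1 - qv * x) * (1 - tv * x)) / ((1 - x) * (1 - qv * tv * x))"

end

theory Submission
  imports Defs
begin

text \<open>Let s swap z_i and z_(i+1). Dividing the kernel of H^m_{q,t} by the denominator of the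
  symmetrization leaves a product of factors F(z_j/z_k) over the pairs j < k, where
  F(x) = (1 - qtx) / ((1 - qx)(1 - tx)(1 - 1/x)). The transposition s permutes these factors,
  except that F(z_i/z_(i+1)) becomes F(z_(i+1)/z_i). Since \<Omega>[Mx] F(x) = 1/((1 - x)(1 - 1/x))
  is invariant under x \<mapsto> 1/x, the product of \<Omega>[M z_i/z_(i+1)] with the kernel is s-invariant,
  so for f antisymmetric the summand is s-antisymmetric. Reindexing the sum over permutations
  w by w \<mapsto> w s shows that it equals its own negative, hence vanishes.\<close>

lemma map_key_mult:
  fixes \<phi> :: "'a::monoid_add \<Rightarrow> 'a" and f g :: "'a \<Rightarrow>\<^sub>0 'b::semiring_0"
  assumes bij: "bij \<phi>" and add: "\<And>a b. \<phi> (a + b) = \<phi> a + \<phi> b"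
  shows "Poly_Mapping.map_key \<phi> (f * g) = Poly_Mapping.map_key \<phi> f * Poly_Mapping.map_key \<phi> g"
proof (rule poly_mapping_eqI)
  fix k
  have inj: "inj \<phi>" using bij bij_is_inj by blast
  have inner: "(\<Sum>q. Poly_Mapping.lookup g q when \<phi> k = \<phi> l + q)
             = (\<Sum>q. Poly_Mapping.lookup g (\<phi> q) when k = l + q)" for l
  proof -
    have "(\<Sum>q. Poly_Mapping.lookup g q when \<phi> k = \<phi> l + q)
        = (\<Sum>q. Poly_Mapping.lookup g (\<phi> q) when \<phi> k = \<phi> l + \<phi> q)"
      by (rule Sum_any.reindex_cong[OF bij]) (simp add: o_def)
    then show ?thesis by (simp add: add[symmetric] inj_eq[OF inj])
  qed
  have "Poly_Mapping.lookup (Poly_Mapping.map_key \<phi> (f * g)) k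
      = (\<Sum>l. Poly_Mapping.lookup f l * (\<Sum>q. Poly_Mapping.lookup g q when \<phi> k = l + q))"
    by (simp add: Poly_Mapping.map_key.rep_eq inj lookup_mult)
  also have "\<dots> = (\<Sum>l. Poly_Mapping.lookup f (\<phi> l)
                      * (\<Sum>q. Poly_Mapping.lookup g q when \<phi> k = \<phi> l + q))"
    by (rule Sum_any.reindex_cong[OF bij]) (simp add: o_def)
  also have "\<dots> = Poly_Mapping.lookup (Poly_Mapping.map_key \<phi> f * Poly_Mapping.map_key \<phi> g) k"
    by (simp add: inner Poly_Mapping.map_key.rep_eq inj lookup_mult)
  finally show "Poly_Mapping.lookup (Poly_Mapping.map_key \<phi> (f * g)) k
      = Poly_Mapping.lookup (Poly_Mapping.map_key \<phi> f * Poly_Mapping.map_key \<phi> g) k" .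
qed

lemma bij_map_key:
  fixes \<sigma> :: "'a \<Rightarrow> 'a"
  assumes "bij \<sigma>"
  shows "bij (Poly_Mapping.map_key \<sigma> :: ('a \<Rightarrow>\<^sub>0 'b::zero) \<Rightarrow> _)"
proof (rule o_bij)
  have inj: "inj \<sigma>" and inj_inv: "inj (inv \<sigma>)"
    using assms bij_is_inj bij_imp_bij_inv by blast+
  show "Poly_Mapping.map_key (inv \<sigma>) \<circ> Poly_Mapping.map_key \<sigma> = (id :: ('a \<Rightarrow>\<^sub>0 'b) \<Rightarrow> _)"
    by (rule ext) (simp add: map_key_compose[OF inj_inv inj] bij_is_surj[OF assms]
        surj_iff[THEN iffD1] map_key_id[unfolded id_def[symmetric]])
  show "Poly_Mapping.map_key \<sigma> \<circ> Poly_Mapping.map_key (inv \<sigma>) = (id :: ('a \<Rightarrow>\<^sub>0 'b) \<Rightarrow> _)"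
    by (rule ext) (simp add: map_key_compose[OF inj inj_inv] inj map_key_id[unfolded id_def[symmetric]])
qed

context
  fixes \<sigma> :: "nat \<Rightarrow> nat"
  assumes bij_\<sigma>: "bij \<sigma>"
begin

lemma inj_map_key_monomial: "inj (Poly_Mapping.map_key \<sigma> :: (nat \<Rightarrow>\<^sub>0 nat) \<Rightarrow> _)"
  using bij_map_key[OF bij_\<sigma>] bij_is_inj by blast

lemma lookup_ren_poly: "Poly_Mapping.lookup (ren_poly \<sigma> p) \<alpha> = Poly_Mapping.lookup p (Poly_Mapping.map_key \<sigma> \<alpha>)"
  unfolding ren_poly_def by (simp add: Poly_Mapping.map_key.rep_eq inj_map_key_monomial)

lemma ren_poly_add: "ren_poly \<sigma> (p + q) = ren_poly \<sigma> p + ren_poly \<sigma> q"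
  unfolding ren_poly_def by (rule map_key_plus[OF inj_map_key_monomial])

lemma ren_poly_mult: "ren_poly \<sigma> (p * q) = ren_poly \<sigma> p * ren_poly \<sigma> q"
  unfolding ren_poly_def
  by (rule map_key_mult[OF bij_map_key[OF bij_\<sigma>] map_key_plus[OF bij_is_inj[OF bij_\<sigma>]]])

lemma ren_poly_uminus: "ren_poly \<sigma> (- p) = - ren_poly \<sigma> p"
  by (rule poly_mapping_eqI) (simp add: lookup_ren_poly)

lemma ren_poly_0: "ren_poly \<sigma> 0 = 0"
  unfolding ren_poly_def by (rule map_key_zero[OF inj_map_key_monomial])

lemma ren_poly_1: "ren_poly \<sigma> 1 = 1"
proof (rule poly_mapping_eqI)
  fix \<alpha> :: "nat \<Rightarrow>\<^sub>0 nat"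
  have "Poly_Mapping.map_key \<sigma> \<alpha> = 0 \<longleftrightarrow> \<alpha> = 0"
    using inj_map_key_monomial map_key_zero[OF bij_is_inj[OF bij_\<sigma>]] by (metis injD)
  then show "Poly_Mapping.lookup (ren_poly \<sigma> 1) \<alpha> = Poly_Mapping.lookup 1 \<alpha>"
    by (simp add: lookup_ren_poly lookup_one)
qed

lemma ren_poly_eq_0_iff: "ren_poly \<sigma> p = 0 \<longleftrightarrow> p = 0"
proof
  assume "ren_poly \<sigma> p = 0"
  then have "\<forall>\<alpha>. Poly_Mapping.lookup p (Poly_Mapping.map_key \<sigma> \<alpha>) = 0"
    by (metis lookup_ren_poly lookup_zero)
  then have "\<forall>\<beta>. Poly_Mapping.lookup p \<beta> = 0"
    using bij_map_key[OF bij_\<sigma>] by (metis bij_pointE)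
  then show "p = 0" by (simp add: poly_mapping_eqI)
qed (simp add: ren_poly_0)

lemma ren_poly_var:
  "ren_poly \<sigma> (Poly_Mapping.single (Poly_Mapping.single k 1) 1)
     = Poly_Mapping.single (Poly_Mapping.single (\<sigma> k) 1) 1"
proof -
  have "Poly_Mapping.map_key \<sigma> (Poly_Mapping.single (\<sigma> k) (1::nat)) = Poly_Mapping.single k 1"
    by (rule map_key_single[OF bij_is_inj[OF bij_\<sigma>]])
  then show ?thesis
    unfolding ren_poly_def by (metis map_key_single[OF inj_map_key_monomial])
qed

lemma ren_ratfun_Fract: "b \<noteq> 0 \<Longrightarrow> ren_ratfun \<sigma> (Fract a b) = Fract (ren_poly \<sigma> a) (ren_poly \<sigma> b)"
  unfolding ren_ratfun_def
proof (rule some_equality)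
  assume b: "b \<noteq> 0"
  then show "\<exists>a' b'. b' \<noteq> 0 \<and> Fract a b = Fract a' b'
               \<and> Fract (ren_poly \<sigma> a) (ren_poly \<sigma> b) = Fract (ren_poly \<sigma> a') (ren_poly \<sigma> b')"
    by blast
  fix y
  assume "\<exists>a' b'. b' \<noteq> 0 \<and> Fract a b = Fract a' b' \<and> y = Fract (ren_poly \<sigma> a') (ren_poly \<sigma> b')"
  then obtain a' b' where b': "b' \<noteq> 0" and eq: "Fract a b = Fract a' b'"
    and y: "y = Fract (ren_poly \<sigma> a') (ren_poly \<sigma> b')"
    by blast
  from eq b b' have "a * b' = a' * b" by (simp add: eq_fract)
  then have "ren_poly \<sigma> a * ren_poly \<sigma> b' = ren_poly \<sigma> a' * ren_poly \<sigma> b"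
    by (metis ren_poly_mult)
  then show "y = Fract (ren_poly \<sigma> a) (ren_poly \<sigma> b)"
    using y b b' by (simp add: eq_fract ren_poly_eq_0_iff)
qed

lemma ren_ratfun_add: "ren_ratfun \<sigma> (x + y) = ren_ratfun \<sigma> x + ren_ratfun \<sigma> y"
proof -
  obtain a b where x: "x = Fract a b" "b \<noteq> 0" by (cases x)
  obtain c d where y: "y = Fract c d" "d \<noteq> 0" by (cases y)
  have "ren_poly \<sigma> b \<noteq> 0" "ren_poly \<sigma> d \<noteq> 0" using x y ren_poly_eq_0_iff by auto
  then show ?thesis
    using x y by (simp add: ren_ratfun_Fract ren_poly_add ren_poly_mult)
qed

lemma ren_ratfun_mult: "ren_ratfun \<sigma> (x * y) = ren_ratfun \<sigma> x * ren_ratfun \<sigma> y"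
  by (cases x, cases y) (simp add: ren_ratfun_Fract ren_poly_mult ren_poly_eq_0_iff)

lemma ren_ratfun_uminus: "ren_ratfun \<sigma> (- x) = - ren_ratfun \<sigma> x"
  by (cases x) (simp add: ren_ratfun_Fract ren_poly_uminus ren_poly_eq_0_iff)

lemma ren_ratfun_diff: "ren_ratfun \<sigma> (x - y) = ren_ratfun \<sigma> x - ren_ratfun \<sigma> y"
  by (simp only: diff_conv_add_uminus ren_ratfun_add ren_ratfun_uminus)

lemma ren_ratfun_0: "ren_ratfun \<sigma> 0 = 0"
  by (simp add: fract_expand ren_ratfun_Fract ren_poly_0 ren_poly_1)

lemma ren_ratfun_1: "ren_ratfun \<sigma> 1 = 1"
  by (simp add: fract_expand ren_ratfun_Fract ren_poly_1)

lemma ren_ratfun_inverse: "ren_ratfun \<sigma> (inverse x) = inverse (ren_ratfun \<sigma> x)"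
proof (cases x)
  case (Fract a b)
  then show ?thesis
    by (cases "a = 0")
      (simp_all add: ren_ratfun_Fract ren_poly_0 fract_collapse ren_poly_eq_0_iff ren_ratfun_0)
qed

lemma ren_ratfun_divide: "ren_ratfun \<sigma> (x / y) = ren_ratfun \<sigma> x / ren_ratfun \<sigma> y"
  by (simp add: divide_inverse ren_ratfun_mult ren_ratfun_inverse)

lemma ren_ratfun_prod: "ren_ratfun \<sigma> (prod g A) = (\<Prod>a\<in>A. ren_ratfun \<sigma> (g a))"
  by (induction A rule: infinite_finite_induct) (simp_all add: ren_ratfun_1 ren_ratfun_mult)

lemma ren_ratfun_Xv: "ren_ratfun \<sigma> (Xv k) = Xv (\<sigma> k)"
  using ren_poly_var[of k] by (simp add: Xv_def ren_ratfun_Fract ren_poly_1)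

end

lemma ren_poly_comp:
  assumes "bij \<sigma>" and "bij \<tau>"
  shows "ren_poly (\<sigma> \<circ> \<tau>) p = ren_poly \<sigma> (ren_poly \<tau> p)"
proof -
  have "inj \<sigma>" and "inj \<tau>" using assms bij_is_inj by blast+
  then have "Poly_Mapping.map_key (\<sigma> \<circ> \<tau>)
      = (Poly_Mapping.map_key \<tau> \<circ> Poly_Mapping.map_key \<sigma> :: (nat \<Rightarrow>\<^sub>0 nat) \<Rightarrow> _)"
    by (intro ext) (simp add: map_key_compose)
  then show ?thesis
    unfolding ren_poly_def
    by (simp add: map_key_compose[OF inj_map_key_monomial[OF assms(1)] inj_map_key_monomial[OF assms(2)]])
qed

lemma ren_ratfun_comp:
  assumes "bij \<sigma>" and "bij \<tau>"
  shows "ren_ratfun (\<sigma> \<circ> \<tau>) x = ren_ratfun \<sigma> (ren_ratfun \<tau> x)"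
proof (cases x)
  case (Fract a b)
  have "bij (\<sigma> \<circ> \<tau>)" using assms bij_comp by blast
  with Fract assms show ?thesis
    by (simp add: ren_ratfun_Fract ren_poly_eq_0_iff ren_poly_comp)
qed

lemma permutes_atLeastAtMost_1_ge_1:
  "p permutes {1..(m::nat)} \<Longrightarrow> 1 \<le> n \<Longrightarrow> 1 \<le> p n"
  by (metis atLeastAtMost_iff permutes_in_image permutes_not_in)

lemma var_perm_inverse:
  assumes "w permutes {1..m}"
  shows "var_perm w \<circ> var_perm (inv w) = id"
proof (rule ext)
  fix k
  show "(var_perm w \<circ> var_perm (inv w)) k = id k"
    using permutes_atLeastAtMost_1_ge_1[OF permutes_inv[OF assms], of "k - 1"]
      permutes_inverses(1)[OF assms]
    by (auto simp: var_perm_def)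
qed

lemma bij_var_perm:
  assumes "w permutes {1..m}"
  shows "bij (var_perm w)"
proof (rule o_bij)
  show "var_perm w \<circ> var_perm (inv w) = id" by (rule var_perm_inverse[OF assms])
  show "var_perm (inv w) \<circ> var_perm w = id"
    using var_perm_inverse[OF permutes_inv[OF assms]] assms by (simp add: permutes_inv_inv)
qed

lemma var_perm_comp:
  assumes "s permutes {1..m}"
  shows "var_perm (w \<circ> s) = var_perm w \<circ> var_perm s"
proof (rule ext)
  fix k
  show "var_perm (w \<circ> s) k = (var_perm w \<circ> var_perm s) k"
    using permutes_atLeastAtMost_1_ge_1[OF assms, of "k - 1"] by (auto simp: var_perm_def)
qed

context
  fixes w :: "nat \<Rightarrow> nat" and m :: nat
  assumes w: "w permutes {1..m}"
begin

lemma act_mult: "act w (x * y) = act w x * act w y"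
  unfolding act_def by (rule ren_ratfun_mult[OF bij_var_perm[OF w]])

lemma act_diff: "act w (x - y) = act w x - act w y"
  unfolding act_def by (rule ren_ratfun_diff[OF bij_var_perm[OF w]])

lemma act_divide: "act w (x / y) = act w x / act w y"
  unfolding act_def by (rule ren_ratfun_divide[OF bij_var_perm[OF w]])

lemma act_uminus: "act w (- x) = - act w x"
  unfolding act_def by (rule ren_ratfun_uminus[OF bij_var_perm[OF w]])

lemma act_1: "act w 1 = 1"
  unfolding act_def by (rule ren_ratfun_1[OF bij_var_perm[OF w]])

lemma act_prod: "act w (prod g A) = (\<Prod>a\<in>A. act w (g a))"
  unfolding act_def by (rule ren_ratfun_prod[OF bij_var_perm[OF w]])

lemma act_qv: "act w qv = qv"
  unfolding act_def qv_def by (simp add: ren_ratfun_Xv[OF bij_var_perm[OF w]] var_perm_def)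

lemma act_tv: "act w tv = tv"
  unfolding act_def tv_def by (simp add: ren_ratfun_Xv[OF bij_var_perm[OF w]] var_perm_def)

text \<open>The bound matters: zv 0 is the variable tv.\<close>
lemma act_zv: "1 \<le> j \<Longrightarrow> act w (zv j) = zv (w j)"
  unfolding act_def zv_def by (simp add: ren_ratfun_Xv[OF bij_var_perm[OF w]] var_perm_def)

lemma act_comp: "s permutes {1..m} \<Longrightarrow> act (w \<circ> s) x = act w (act s x)"
  unfolding act_def by (simp add: var_perm_comp ren_ratfun_comp[OF bij_var_perm[OF w] bij_var_perm])

end

definition ratfun_monom :: "(nat \<Rightarrow>\<^sub>0 nat) \<Rightarrow> ratfun" where
  "ratfun_monom \<alpha> = Fract (Poly_Mapping.single \<alpha> 1) 1"

lemma Xv_eq_ratfun_monom: "Xv k = ratfun_monom (Poly_Mapping.single k 1)"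
  by (simp add: Xv_def ratfun_monom_def)

lemma ratfun_monom_mult: "ratfun_monom \<alpha> * ratfun_monom \<beta> = ratfun_monom (\<alpha> + \<beta>)"
  by (simp add: ratfun_monom_def mult_single)

lemma ratfun_monom_neq_0: "ratfun_monom \<alpha> \<noteq> 0"
proof -
  have "Poly_Mapping.single \<alpha> (1::rat) \<noteq> 0"
    by (metis lookup_single_eq lookup_zero one_neq_zero)
  then show ?thesis by (simp add: ratfun_monom_def fract_expand eq_fract)
qed

lemma ratfun_monom_inject: "ratfun_monom \<alpha> = ratfun_monom \<beta> \<longleftrightarrow> \<alpha> = \<beta>"
  by (simp add: ratfun_monom_def eq_fract)
    (metis inj_single injD one_neq_zero lookup_single_eq lookup_single_not_eq)

lemma one_minus_param_monom_ratio_neq_0: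
  assumes "Poly_Mapping.lookup \<gamma> 0 \<noteq> 0 \<or> Poly_Mapping.lookup \<gamma> 1 \<noteq> 0" and "1 \<le> l"
  shows "1 - ratfun_monom \<gamma> * zv k / zv l \<noteq> 0"
proof -
  obtain n where "n \<le> 1" and "Poly_Mapping.lookup \<gamma> n \<noteq> 0"
    using assms(1) by (metis le_refl zero_le)
  with assms(2) have "Poly_Mapping.lookup (\<gamma> + Poly_Mapping.single (Suc k) 1) n
      \<noteq> Poly_Mapping.lookup (Poly_Mapping.single (Suc l) (1::nat)) n"
    by (auto simp: lookup_add lookup_single when_def)
  then have "ratfun_monom (\<gamma> + Poly_Mapping.single (Suc k) 1) \<noteq> ratfun_monom (Poly_Mapping.single (Suc l) 1)"
    by (auto simp: ratfun_monom_inject)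
  then show ?thesis
    using ratfun_monom_neq_0[of "Poly_Mapping.single (Suc l) 1"]
    by (simp add: zv_def Xv_eq_ratfun_monom ratfun_monom_mult)
qed

lemma one_minus_param_ratio_neq_0:
  assumes "1 \<le> l"
  shows "1 - qv * zv k / zv l \<noteq> 0" and "1 - tv * zv k / zv l \<noteq> 0"
    and "1 - qv * tv * zv k / zv l \<noteq> 0"
  using one_minus_param_monom_ratio_neq_0[OF _ assms, of "Poly_Mapping.single 0 1" k]
    one_minus_param_monom_ratio_neq_0[OF _ assms, of "Poly_Mapping.single 1 1" k]
    one_minus_param_monom_ratio_neq_0[OF _ assms,
      of "Poly_Mapping.single 0 1 + Poly_Mapping.single 1 1" k]
  by (simp_all add: qv_def tv_def Xv_eq_ratfun_monom ratfun_monom_mult lookup_add lookup_single)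

definition hfactor :: "nat \<Rightarrow> nat \<Rightarrow> ratfun" where
  "hfactor j k = (1 - qv * tv * zv j / zv k) / ((1 - qv * zv j / zv k) * (1 - tv * zv j / zv k))
                 / (1 - zv k / zv j)"

lemma Omega_factor_cancel:
  fixes q t x y :: "'a::field"
  assumes "1 - q * x \<noteq> 0" and "1 - t * x \<noteq> 0" and "1 - q * t * x \<noteq> 0"
  shows "(1 - q * x) * (1 - t * x) / ((1 - x) * (1 - q * t * x))
           * ((1 - q * t * x) / ((1 - q * x) * (1 - t * x)) / y) = 1 / ((1 - x) * y)"
  using assms by (simp add: divide_simps)

lemma OmegaM_mult_hfactor:
  assumes "1 \<le> k"
  shows "OmegaM (zv j / zv k) * hfactor j k = 1 / ((1 - zv j / zv k) * (1 - zv k / zv j))"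
proof -
  define x where "x = zv j / zv k"
  have "hfactor j k = (1 - qv * tv * x) / ((1 - qv * x) * (1 - tv * x)) / (1 - zv k / zv j)"
    by (simp add: hfactor_def x_def)
  moreover have "1 - qv * x \<noteq> 0" "1 - tv * x \<noteq> 0" "1 - qv * tv * x \<noteq> 0"
    using one_minus_param_ratio_neq_0[OF assms, of j] by (simp_all add: x_def)
  ultimately show ?thesis
    unfolding OmegaM_def x_def[symmetric] by (simp add: Omega_factor_cancel)
qed

definition upper_pairs :: "nat \<Rightarrow> (nat \<times> nat) set" where
  "upper_pairs m = Sigma {1..m} (\<lambda>j. {j<..m})"

definition hkernel :: "nat \<Rightarrow> ratfun" where
  "hkernel m = (\<Prod>(j, k)\<in>upper_pairs m. hfactor j k)"

lemma finite_upper_pairs: "finite (upper_pairs m)"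
  by (simp add: upper_pairs_def)

lemma upper_pairs_adjacent: "1 \<le> i \<Longrightarrow> i < m \<Longrightarrow> (i, Suc i) \<in> upper_pairs m"
  by (simp add: upper_pairs_def)

lemma Hqt_eq_sum_act: "Hqt m g = (\<Sum>w | w permutes {1..m}. act w (g * hkernel m))"
proof -
  have "hkernel m = (\<Prod>j\<in>{1..m}. \<Prod>k\<in>{j<..m}. hfactor j k)"
    by (simp add: hkernel_def upper_pairs_def prod.Sigma)
  also have "\<dots> = (\<Prod>j\<in>{1..m}. \<Prod>k\<in>{j<..m}.
          (1 - qv * tv * zv j / zv k) / ((1 - qv * zv j / zv k) * (1 - tv * zv j / zv k)))
        / (\<Prod>j\<in>{1..m}. \<Prod>k\<in>{j<..m}. 1 - zv k / zv j)"
    by (simp only: hfactor_def prod_dividef)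
  finally show ?thesis
    unfolding Hqt_def symz_def by (simp only: times_divide_eq_right)
qed

lemma bij_betw_transpose_upper_pairs:
  assumes "1 \<le> i" and "i < m"
  shows "bij_betw (\<lambda>(j, k). (transpose i (Suc i) j, transpose i (Suc i) k))
           (upper_pairs m - {(i, Suc i)}) (upper_pairs m - {(i, Suc i)})"
proof -
  let ?\<tau> = "\<lambda>(j, k). (transpose i (Suc i) j, transpose i (Suc i) k)"
    and ?P = "upper_pairs m - {(i, Suc i)}"
  have "?\<tau> ` ?P \<subseteq> ?P"
    using assms by (auto simp: upper_pairs_def transpose_def split: if_splits)
  moreover have "\<forall>p \<in> ?P. ?\<tau> (?\<tau> p) = p" by auto
  ultimately show ?thesis by (intro bij_betw_byWitness[where f' = ?\<tau>])
qed

lemma prod_upper_pairs_transpose: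
  fixes F :: "nat \<Rightarrow> nat \<Rightarrow> 'a::comm_monoid_mult"
  assumes "1 \<le> i" and "i < m"
  shows "(\<Prod>(j, k)\<in>upper_pairs m. F (transpose i (Suc i) j) (transpose i (Suc i) k))
       = F (Suc i) i * (\<Prod>(j, k)\<in>upper_pairs m - {(i, Suc i)}. F j k)"
proof -
  have "(\<Prod>(j, k)\<in>upper_pairs m. F (transpose i (Suc i) j) (transpose i (Suc i) k))
      = F (Suc i) i * (\<Prod>(j, k)\<in>upper_pairs m - {(i, Suc i)}.
                         F (transpose i (Suc i) j) (transpose i (Suc i) k))"
    by (simp add: prod.remove[OF finite_upper_pairs upper_pairs_adjacent[OF assms]])
  also have "\<dots> = F (Suc i) i * (\<Prod>(j, k)\<in>upper_pairs m - {(i, Suc i)}. F j k)"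
    using prod.reindex_bij_betw[OF bij_betw_transpose_upper_pairs[OF assms], of "\<lambda>(j, k). F j k"]
    by (simp add: case_prod_unfold)
  finally show ?thesis .
qed

lemma act_OmegaM: "w permutes {1..m} \<Longrightarrow> act w (OmegaM x) = OmegaM (act w x)"
  by (simp add: OmegaM_def act_mult act_divide act_diff act_1 act_qv act_tv)

lemma act_hfactor:
  "w permutes {1..m} \<Longrightarrow> 1 \<le> j \<Longrightarrow> 1 \<le> k \<Longrightarrow> act w (hfactor j k) = hfactor (w j) (w k)"
  by (simp add: hfactor_def act_mult act_divide act_diff act_1 act_qv act_tv act_zv)

lemma act_transpose_OmegaM_hkernel:
  assumes "1 \<le> i" and "i < m"
  shows "act (transpose i (Suc i)) (OmegaM (zv i / zv (Suc i)) * hkernel m)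
       = OmegaM (zv i / zv (Suc i)) * hkernel m"
proof -
  let ?s = "transpose i (Suc i)" and ?R = "\<Prod>(j, k)\<in>upper_pairs m - {(i, Suc i)}. hfactor j k"
  have s: "?s permutes {1..m}" using assms by (intro permutes_swap_id) auto
  have "act ?s (hkernel m) = (\<Prod>(j, k)\<in>upper_pairs m. hfactor (?s j) (?s k))"
    unfolding hkernel_def act_prod[OF s]
    by (intro prod.cong) (auto simp: upper_pairs_def act_hfactor[OF s])
  also have "\<dots> = hfactor (Suc i) i * ?R"
    by (rule prod_upper_pairs_transpose[OF assms])
  finally have "act ?s (OmegaM (zv i / zv (Suc i)) * hkernel m)
      = OmegaM (zv (Suc i) / zv i) * hfactor (Suc i) i * ?R"
    using assms by (simp add: act_mult[OF s] act_OmegaM[OF s] act_divide[OF s] act_zv[OF s])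
  also have "\<dots> = OmegaM (zv i / zv (Suc i)) * hfactor i (Suc i) * ?R"
    using OmegaM_mult_hfactor[of i "Suc i"] OmegaM_mult_hfactor[of "Suc i" i] assms
    by (simp add: mult.commute)
  also have "\<dots> = OmegaM (zv i / zv (Suc i)) * hkernel m"
    using prod.remove[OF finite_upper_pairs upper_pairs_adjacent[OF assms], of "\<lambda>(j, k). hfactor j k"]
    by (simp add: hkernel_def mult.assoc)
  finally show ?thesis .
qed

text \<open>The fraction field has no field_char_0 instance, so this is checked by hand.\<close>
lemma ratfun_two_neq_0: "(2::ratfun) \<noteq> 0"
proof -
  have "(of_nat 2 :: rpoly) \<noteq> 0" by (metis of_nat_eq_0_iff zero_neq_numeral)
  then have "(of_nat 2 :: ratfun) \<noteq> 0" by (simp only: of_nat_fract) (simp add: fract_expand eq_fract)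
  then show ?thesis by simp
qed

lemma sum_act_permutes_eq_0:
  assumes "s permutes {1..m}" and "act s g = - g"
  shows "(\<Sum>w | w permutes {1..m}. act w g) = 0"
proof -
  let ?S = "\<Sum>w | w permutes {1..m}. act w g"
  have "?S = (\<Sum>w | w permutes {1..m}. act (w \<circ> s) g)"
    by (rule sum_permutations_compose_right[OF assms(1)])
  also have "\<dots> = (\<Sum>w | w permutes {1..m}. - act w g)"
    using assms by (intro sum.cong) (simp_all add: act_comp act_uminus)
  also have "\<dots> = - ?S"
    by (rule sum_negf)
  finally have "?S + ?S = 0" by (metis add.right_inverse)
  then have "2 * ?S = 0" by (simp only: mult_2)
  then show ?thesis using ratfun_two_neq_0 by simp
qed

theorem lemma4p2p2:
  fixes m i :: nat and f :: ratfun
  assumes "m \<ge> 2" and "1 \<le> i" and "i \<le> m - 1"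
    and "ratfun_in_vars {0..Suc m} f"
    and "act (Transposition.transpose i (Suc i)) f = - f"
  shows "Hqt m (OmegaM (zv i / zv (Suc i)) * f) = 0"
proof -
  let ?s = "Transposition.transpose i (Suc i)" and ?\<Omega> = "OmegaM (zv i / zv (Suc i))"
  have i: "1 \<le> i" "i < m" using assms(1-3) by auto
  have s: "?s permutes {1..m}" using i by (intro permutes_swap_id) auto
  have "act ?s (f * (?\<Omega> * hkernel m)) = act ?s f * act ?s (?\<Omega> * hkernel m)"
    by (rule act_mult[OF s])
  also have "\<dots> = - (f * (?\<Omega> * hkernel m))"
    using assms(5) act_transpose_OmegaM_hkernel[OF i] by simp
  finally have "(\<Sum>w | w permutes {1..m}. act w (f * (?\<Omega> * hkernel m))) = 0"
    by (rule sum_act_permutes_eq_0[OF s])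
  then show ?thesis
    by (simp add: Hqt_eq_sum_act mult_ac)
qed

end
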